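(* Let $d$ be a metric on $\mathbb R^n$ induced by a norm, $\delta>0$. Let $\{\mathcal D^n(\delta);\tilde w_1,\dots,\tilde w_N;p_1,\dots,p_N\}$ be a DIFS in which each $\tilde w_i$ is the $\delta$-roundoff of a contraction $w_i$ on $(\mathbb R^n,d)$ with contractivity factor $\lambda_i$, and let $\lambda_{max}=\max_i\lambda_i$. Let $\{\mathbb R^n;w_1,\dots,w_N;q_1,\dots,q_N\}$ be an IFS with constant probabilities $q_i\in(0,1]$, $\sum_iq_i=1$. Let $\tilde x_0\in\mathcal D^n(\delta)$, and let $X=\{X_k\}$ with $X_0=\tilde x_0$ and $\tilde X=\{\tilde X_k\}$ with $\tilde X_0=\tilde x_0$ be the Markov chains generated by the IFS and the DIFS respectively (at each step a map index is chosen according to $(q_i)$, resp. $(p_i(\tilde X_{k-1}))$, and the chosen map is applied). Then for any orbit $\{x_k=w_{i_k}(x_{k-1})\}$ of $X$ (respectively any orbit $\{\tilde x_k=\tilde w_{i_k}(\tilde x_{k-1})\}$ of $\tilde X$) there exists an orbit $\{\tilde x_k=\tilde w_{i_k}(\tilde x_{k-1})\}$ of $\tilde X$ (respectively an orbit $\{x_k=w_{i_k}(x_{k-1})\}$ of $X$), with the same index sequence $(i_k)$ and $x_0=\tilde x_0$, such that for all $k\in\mathbb N$, $$d(x_k,\tilde x_k)\le\theta(1-\lambda_{max})^{-1}.$$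
   Context: For $m\in\mathbb Z^n$, $C_\delta(m)=\prod_{j=1}^n[(m_j-\tfrac12)\delta,(m_j+\tfrac12)\delta)$; $\mathcal D^n(\delta)=\{\delta m:m\in\mathbb Z^n\}\subset\mathbb R^n$. The $\delta$-roundoff of $x\in\mathbb R^n$ is $\tilde x=\delta m$ where $x\in C_\delta(m)$; the $\delta$-roundoff of $w$ is $\tilde w(\tilde x)=\widetilde{w(\tilde x)}$ on $\mathcal D^n(\delta)$. $\theta:=\tfrac12\operatorname{diam}_d(C_\delta(0))$. A DIFS $\{S;\tilde w_1,\dots,\tilde w_N;p_1,\dots,p_N\}$ consists of $S\subset\mathcal D^n(\delta)$, maps $\tilde w_i:S\to S$ and functions $p_i:S\to(0,1]$ with $\sum_ip_i(\tilde x)=1$ for every $\tilde x$. *)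

theory Defs
  imports "HOL-Analysis.Analysis"
begin

text \<open>A norm on R^n (the metric d is d x y = nrm (x - y)).\<close>
definition is_norm :: "(real^'n \<Rightarrow> real) \<Rightarrow> bool" where
  "is_norm nrm \<longleftrightarrow>
     (\<forall>x. nrm x = 0 \<longleftrightarrow> x = 0) \<and>
     (\<forall>x y. nrm (x + y) \<le> nrm x + nrm y) \<and>
     (\<forall>c x. nrm (c *\<^sub>R x) = \<bar>c\<bar> * nrm x)"

definition cell :: "real \<Rightarrow> (int^'n) \<Rightarrow> (real^'n) set" where
  "cell \<delta> m = {x. \<forall>j. (real_of_int (m$j) - 1/2) * \<delta> \<le> x$j \<and> x$j < (real_of_int (m$j) + 1/2) * \<delta>}"

definition grid :: "real \<Rightarrow> (real^'n) set" where
  "grid \<delta> = {x. \<exists>m::int^'n. x = (\<chi> j. \<delta> * real_of_int (m$j))}"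

text \<open>delta-roundoff: the grid point delta*m with x in C_delta(m).\<close>
definition roundoff :: "real \<Rightarrow> real^'n \<Rightarrow> real^'n" where
  "roundoff \<delta> x = (\<chi> j. \<delta> * real_of_int \<lfloor>x$j / \<delta> + 1/2\<rfloor>)"

definition theta :: "(real^'n \<Rightarrow> real) \<Rightarrow> real \<Rightarrow> real" where
  "theta nrm \<delta> = (1/2) * (SUP x\<in>cell \<delta> (0::int^'n). SUP y\<in>cell \<delta> 0. nrm (x - y))"

end

theory Submission
  imports Defs
begin

text \<open>The roundoff error \<open>y - roundoff \<delta> y\<close> always lies in the cell \<open>C\<^sub>\<delta>(0)\<close>, so its norm is
  at most \<open>\<theta>\<close>. Along a common index sequence the distances \<open>e\<^sub>k\<close> between the two orbits
  therefore satisfy \<open>e\<^sub>0 = 0\<close> and \<open>e\<^sub>k\<^sub>+\<^sub>1 \<le> \<lambda>\<^sub>m\<^sub>a\<^sub>x e\<^sub>k + \<theta>\<close>, and this affine recurrence keeps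
  them below its fixed point \<open>\<theta> / (1 - \<lambda>\<^sub>m\<^sub>a\<^sub>x)\<close>. Either orbit is obtained from the other by
  iterating the maps along its index sequence; the probabilities matter only through their
  positivity on the indices used.\<close>

lemma is_norm_zero: "is_norm nrm \<Longrightarrow> nrm 0 = 0"
  unfolding is_norm_def by blast

lemma is_norm_triangle: "is_norm nrm \<Longrightarrow> nrm (x + y) \<le> nrm x + nrm y"
  unfolding is_norm_def by blast

lemma is_norm_scaleR: "is_norm nrm \<Longrightarrow> nrm (c *\<^sub>R x) = \<bar>c\<bar> * nrm x"
  unfolding is_norm_def by blast

lemma is_norm_nonneg:
  assumes "is_norm nrm"
  shows "0 \<le> nrm x"
proof -
  have "nrm (- x) = nrm x"
    using is_norm_scaleR[OF assms, of "-1" x] by simp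
  moreover have "nrm (x + - x) \<le> nrm x + nrm (- x)"
    using is_norm_triangle[OF assms] .
  ultimately show ?thesis
    using is_norm_zero[OF assms] by simp
qed

lemma is_norm_sum_le:
  assumes "is_norm nrm"
  shows "nrm (sum f A) \<le> (\<Sum>a\<in>A. nrm (f a))"
proof (induction A rule: infinite_finite_induct)
  case (insert a A)
  then show ?case
    using is_norm_triangle[OF assms, of "f a" "sum f A"] by simp
qed (simp_all add: is_norm_zero[OF assms])

lemma is_norm_le_sum_Basis:
  fixes nrm :: "real^'n \<Rightarrow> real"
  assumes nrm: "is_norm nrm" and coords: "\<And>j. \<bar>x$j\<bar> \<le> c"
  shows "nrm x \<le> (\<Sum>b\<in>Basis. c * nrm b)"
proof -
  have "nrm x = nrm (\<Sum>b\<in>Basis. (x \<bullet> b) *\<^sub>R b)"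
    by (simp add: euclidean_representation)
  also have "\<dots> \<le> (\<Sum>b\<in>Basis. \<bar>x \<bullet> b\<bar> * nrm b)"
    using is_norm_sum_le[OF nrm, of "\<lambda>b. (x \<bullet> b) *\<^sub>R b" Basis]
    by (simp add: is_norm_scaleR[OF nrm])
  also have "\<dots> \<le> (\<Sum>b\<in>Basis. c * nrm b)"
  proof (rule sum_mono)
    fix b :: "real^'n"
    assume "b \<in> Basis"
    then obtain j where "b = axis j 1"
      unfolding Basis_vec_def by auto
    then have "\<bar>x \<bullet> b\<bar> \<le> c"
      using coords by (simp add: inner_axis)
    then show "\<bar>x \<bullet> b\<bar> * nrm b \<le> c * nrm b"
      using is_norm_nonneg[OF nrm] by (simp add: mult_right_mono)
  qed
  finally show ?thesis .
qed

lemma mem_cell_zero_iff: "y \<in> cell \<delta> 0 \<longleftrightarrow> (\<forall>j. - \<delta>/2 \<le> y$j \<and> y$j < \<delta>/2)"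
  unfolding cell_def by auto

lemma mem_cell_zero_if_abs_less:
  assumes "\<And>j. \<bar>y$j\<bar> < \<delta>/2"
  shows "y \<in> cell \<delta> 0"
  unfolding cell_def
proof safe
  fix j
  show "(real_of_int (0$j) - 1/2) * \<delta> \<le> y$j" "y$j < (real_of_int (0$j) + 1/2) * \<delta>"
    using assms[of j] by (simp_all add: abs_less_iff)
qed

lemma roundoff_in_grid: "roundoff \<delta> x \<in> grid \<delta>"
  unfolding roundoff_def grid_def by (auto intro: exI[of _ "\<chi> j. \<lfloor>x$j / \<delta> + 1/2\<rfloor>"])

lemma diff_roundoff_in_cell_zero:
  assumes "\<delta> > 0"
  shows "x - roundoff \<delta> x \<in> cell \<delta> 0"
  unfolding mem_cell_zero_iff
proof
  fix j
  let ?m = "\<lfloor>x$j / \<delta> + 1/2\<rfloor>"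
  have m: "real_of_int ?m \<le> x$j / \<delta> + 1/2" "x$j / \<delta> + 1/2 < real_of_int ?m + 1"
    by linarith+
  have scale: "\<delta> * (x$j / \<delta> + 1/2) = x$j + \<delta>/2"
    using assms by (simp add: field_simps)
  have "\<delta> * real_of_int ?m \<le> x$j + \<delta>/2"
    using mult_left_mono[OF m(1), of \<delta>] assms scale by simp
  moreover have "x$j + \<delta>/2 < \<delta> * real_of_int ?m + \<delta>"
    using mult_strict_left_mono[OF m(2) assms] scale by (simp add: distrib_left)
  ultimately show "- \<delta>/2 \<le> (x - roundoff \<delta> x)$j \<and> (x - roundoff \<delta> x)$j < \<delta>/2"
    unfolding roundoff_def by simp
qed

lemma is_norm_diff_le_diam_cell_zero:
  fixes nrm :: "real^'n \<Rightarrow> real"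
  assumes nrm: "is_norm nrm"
    and a: "a \<in> cell \<delta> 0" and b: "b \<in> cell \<delta> 0"
  shows "nrm (a - b) \<le> (SUP x\<in>cell \<delta> 0. SUP y\<in>cell \<delta> 0. nrm (x - y))"
proof -
  let ?C = "cell \<delta> (0::int^'n)"
  have bounded: "nrm (x - y) \<le> (\<Sum>b\<in>Basis. \<delta> * nrm b)" if "x \<in> ?C" "y \<in> ?C" for x y
  proof (rule is_norm_le_sum_Basis[OF nrm])
    fix j
    have "- \<delta>/2 \<le> x$j" "x$j < \<delta>/2" "- \<delta>/2 \<le> y$j" "y$j < \<delta>/2"
      using that by (auto simp: mem_cell_zero_iff)
    then show "\<bar>(x - y)$j\<bar> \<le> \<delta>"
      by simp
  qed
  have "?C \<noteq> {}"
    using a by blast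
  then have bdd_outer: "bdd_above ((\<lambda>x. SUP y\<in>?C. nrm (x - y)) ` ?C)"
    using bounded by (auto intro!: bdd_aboveI cSUP_least)
  have "nrm (a - b) \<le> (SUP y\<in>?C. nrm (a - y))"
    using bounded a b by (auto intro!: cSUP_upper bdd_aboveI)
  also have "\<dots> \<le> (SUP x\<in>?C. SUP y\<in>?C. nrm (x - y))"
    using a bdd_outer by (rule cSUP_upper)
  finally show ?thesis .
qed

lemma is_norm_le_theta:
  fixes nrm :: "real^'n \<Rightarrow> real"
  assumes nrm: "is_norm nrm" and \<delta>: "\<delta> > 0" and y: "y \<in> cell \<delta> 0"
  shows "nrm y \<le> theta nrm \<delta>"
proof (rule field_le_mult_one_interval)
  \<comment> \<open>\<open>-y\<close> may leave the half-open cell, but \<open>\<pm>t y\<close> stay inside for \<open>t < 1\<close>.\<close>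
  fix t :: real
  assume t: "0 < t" "t < 1"
  have y_bound: "\<bar>y$j\<bar> \<le> \<delta>/2" for j
  proof -
    have "- \<delta>/2 \<le> y$j" "y$j < \<delta>/2"
      using y by (auto simp: mem_cell_zero_iff)
    then show ?thesis
      by simp
  qed
  have "\<bar>t * y$j\<bar> \<le> t * (\<delta>/2)" for j
    using mult_left_mono[OF y_bound, of t] t by (simp add: abs_mult)
  moreover have "t * (\<delta>/2) < \<delta>/2"
    using t \<delta> by simp
  ultimately have "\<bar>t * y$j\<bar> < \<delta>/2" for j
    by (rule le_less_trans)
  then have "t *\<^sub>R y \<in> cell \<delta> 0" "- (t *\<^sub>R y) \<in> cell \<delta> 0"
    by (simp_all add: mem_cell_zero_if_abs_less)
  note diam = is_norm_diff_le_diam_cell_zero[OF nrm this]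
  have "2 * (t * nrm y) = nrm ((2 * t) *\<^sub>R y)"
    using t by (simp add: is_norm_scaleR[OF nrm])
  also have "(2 * t) *\<^sub>R y = t *\<^sub>R y - - (t *\<^sub>R y)"
    by (metis diff_minus_eq_add scaleR_2 scaleR_scaleR)
  also have "nrm \<dots> \<le> 2 * theta nrm \<delta>"
    using diam unfolding theta_def by linarith
  finally show "t * nrm y \<le> theta nrm \<delta>"
    by linarith
qed

lemma theta_nonneg:
  fixes nrm :: "real^'n \<Rightarrow> real"
  assumes "is_norm nrm" "\<delta> > 0"
  shows "0 \<le> theta nrm \<delta>"
  using is_norm_le_theta[OF assms, of 0] assms by (simp add: is_norm_zero mem_cell_zero_iff)

lemma affine_recurrence_le_fixed_point:
  fixes e :: "nat \<Rightarrow> real"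
  assumes "e 0 \<le> c / (1 - L)" "0 \<le> L" "L < 1"
    and step: "\<And>k. e (Suc k) \<le> L * e k + c"
  shows "e k \<le> c / (1 - L)"
proof (induction k)
  case (Suc k)
  have "e (Suc k) \<le> L * (c / (1 - L)) + c"
    using step[of k] mult_left_mono[OF Suc \<open>0 \<le> L\<close>] by linarith
  also have "\<dots> = c / (1 - L)"
    using \<open>L < 1\<close> by (simp add: field_simps)
  finally show ?case .
qed (use assms in simp)

lemma roundoff_orbit_dist_le:
  fixes nrm :: "real^'n \<Rightarrow> real" and f :: "nat \<Rightarrow> real^'n \<Rightarrow> real^'n"
  assumes nrm: "is_norm nrm" and \<delta>: "\<delta> > 0" and L: "0 \<le> L" "L < 1"
    and lipschitz: "\<And>k u v. nrm (f k u - f k v) \<le> L * nrm (u - v)"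
    and start: "x 0 = xt 0"
    and x_step: "\<And>k. x (Suc k) = f k (x k)"
    and xt_step: "\<And>k. xt (Suc k) = roundoff \<delta> (f k (xt k))"
  shows "nrm (x k - xt k) \<le> theta nrm \<delta> / (1 - L)"
proof (rule affine_recurrence_le_fixed_point[OF _ L])
  show "nrm (x 0 - xt 0) \<le> theta nrm \<delta> / (1 - L)"
    using start L theta_nonneg[OF nrm \<delta>] by (simp add: is_norm_zero[OF nrm])
next
  fix k
  let ?y = "f k (xt k)"
  have "x (Suc k) - xt (Suc k) = (f k (x k) - ?y) + (?y - roundoff \<delta> ?y)"
    using x_step xt_step by simp
  then have "nrm (x (Suc k) - xt (Suc k)) \<le> nrm (f k (x k) - ?y) + nrm (?y - roundoff \<delta> ?y)"
    using is_norm_triangle[OF nrm] by metis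
  also have "\<dots> \<le> L * nrm (x k - xt k) + theta nrm \<delta>"
    using lipschitz is_norm_le_theta[OF nrm \<delta> diff_roundoff_in_cell_zero[OF \<delta>]] by (rule add_mono)
  finally show "nrm (x (Suc k) - xt (Suc k)) \<le> L * nrm (x k - xt k) + theta nrm \<delta>" .
qed

lemma grid_orbit_is_roundoff_orbit:
  assumes wt: "\<And>i z. i \<in> I \<Longrightarrow> z \<in> grid \<delta> \<Longrightarrow> wt i z = roundoff \<delta> (w i z)"
    and idx: "\<And>k. idx (Suc k) \<in> I"
    and start: "xt 0 \<in> grid \<delta>"
    and step: "\<And>k. xt (Suc k) = wt (idx (Suc k)) (xt k)"
  shows orbit_in_grid: "xt k \<in> grid \<delta>"
    and orbit_roundoff_step: "xt (Suc k) = roundoff \<delta> (w (idx (Suc k)) (xt k))"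
proof -
  show in_grid: "xt k \<in> grid \<delta>" for k
  proof (induction k)
    case (Suc k)
    then show ?case
      using step wt[OF idx] roundoff_in_grid by metis
  qed (fact start)
  show "xt (Suc k) = roundoff \<delta> (w (idx (Suc k)) (xt k))"
    using step wt[OF idx in_grid] by simp
qed

lemma Max_in_unit_interval:
  assumes "finite A" "A \<noteq> {}" "\<And>i. i \<in> A \<Longrightarrow> 0 \<le> lam i \<and> lam i < 1"
  shows "0 \<le> Max (lam ` A)" "Max (lam ` A) < 1"
proof -
  have "Max (lam ` A) \<in> lam ` A"
    using assms by (intro Max_in) auto
  then show "0 \<le> Max (lam ` A)" "Max (lam ` A) < 1"
    using assms(3) by auto
qed

lemma shadowing_orbit_dist_le:
  fixes nrm :: "real^'n \<Rightarrow> real" and N :: nat and lam :: "nat \<Rightarrow> real"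
  assumes norm: "is_norm nrm" and delta: "\<delta> > 0" and N: "N \<ge> 1"
    and contr: "\<And>i. i \<in> {1..N} \<Longrightarrow> 0 \<le> lam i \<and> lam i < 1 \<and>
                   (\<forall>x y. nrm (w i x - w i y) \<le> lam i * nrm (x - y))"
    and wt: "\<And>i z. i \<in> {1..N} \<Longrightarrow> z \<in> grid \<delta> \<Longrightarrow> wt i z = roundoff \<delta> (w i z)"
    and x0: "x0 \<in> grid \<delta>"
    and idx: "\<And>k. idx (Suc k) \<in> {1..N}"
    and start: "x 0 = x0" "xt 0 = x0"
    and x_step: "\<And>k. x (Suc k) = w (idx (Suc k)) (x k)"
    and xt_step: "\<And>k. xt (Suc k) = wt (idx (Suc k)) (xt k)"
  shows "nrm (x k - xt k) \<le> theta nrm \<delta> / (1 - Max (lam ` {1..N}))"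
proof (rule roundoff_orbit_dist_le[OF norm delta])
  have factors: "0 \<le> lam i \<and> lam i < 1" if "i \<in> {1..N}" for i
    using contr[OF that] by blast
  then show "0 \<le> Max (lam ` {1..N})" "Max (lam ` {1..N}) < 1"
    using N by (auto intro!: Max_in_unit_interval factors)
  fix k u v
  have "lam (idx (Suc k)) \<le> Max (lam ` {1..N})"
    using idx by simp
  then show "nrm (w (idx (Suc k)) u - w (idx (Suc k)) v) \<le> Max (lam ` {1..N}) * nrm (u - v)"
    using contr[OF idx] is_norm_nonneg[OF norm, of "u - v"] by (meson mult_right_mono order_trans)
next
  have "xt 0 \<in> grid \<delta>"
    using start x0 by simp
  from orbit_roundoff_step[OF wt idx this xt_step]
  show "\<And>k. xt (Suc k) = roundoff \<delta> (w (idx (Suc k)) (xt k))" .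
qed (use start x_step in auto)

lemma orbit_exists: "\<exists>x. x 0 = a \<and> (\<forall>k. x (Suc k) = f k (x k))"
  by (rule exI[of _ "rec_nat a f"]) simp

theorem lemma6:
  fixes nrm :: "real^'n \<Rightarrow> real"
    and \<delta> :: real and N :: nat
    and w wt :: "nat \<Rightarrow> real^'n \<Rightarrow> real^'n"
    and lam :: "nat \<Rightarrow> real"
    and p :: "nat \<Rightarrow> real^'n \<Rightarrow> real"
    and q :: "nat \<Rightarrow> real"
    and x0 :: "real^'n"
  assumes norm: "is_norm nrm"
    and delta: "\<delta> > 0"
    and N: "N \<ge> 1"
    and contr: "\<And>i. i \<in> {1..N} \<Longrightarrow> 0 \<le> lam i \<and> lam i < 1 \<and>
                   (\<forall>x y. nrm (w i x - w i y) \<le> lam i * nrm (x - y))"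
    and wt: "\<And>i xt. i \<in> {1..N} \<Longrightarrow> xt \<in> grid \<delta> \<Longrightarrow> wt i xt = roundoff \<delta> (w i xt)"
    and p_pos: "\<And>i xt. i \<in> {1..N} \<Longrightarrow> xt \<in> grid \<delta> \<Longrightarrow> 0 < p i xt \<and> p i xt \<le> 1"
    and p_sum: "\<And>xt. xt \<in> grid \<delta> \<Longrightarrow> (\<Sum>i=1..N. p i xt) = 1"
    and q_pos: "\<And>i. i \<in> {1..N} \<Longrightarrow> 0 < q i \<and> q i \<le> 1"
    and q_sum: "(\<Sum>i=1..N. q i) = 1"
    and x0: "x0 \<in> grid \<delta>"
  shows
    "(\<forall>(x :: nat \<Rightarrow> real^'n) (idx :: nat \<Rightarrow> nat).
        x 0 = x0 \<and> (\<forall>k. idx (Suc k) \<in> {1..N} \<and> 0 < q (idx (Suc k)) \<and>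
                         x (Suc k) = w (idx (Suc k)) (x k))
        \<longrightarrow> (\<exists>xt :: nat \<Rightarrow> real^'n. xt 0 = x0 \<and>
               (\<forall>k. 0 < p (idx (Suc k)) (xt k) \<and> xt (Suc k) = wt (idx (Suc k)) (xt k)) \<and>
               (\<forall>k. nrm (x k - xt k) \<le> theta nrm \<delta> / (1 - Max (lam ` {1..N})))))
   \<and> (\<forall>(xt :: nat \<Rightarrow> real^'n) (idx :: nat \<Rightarrow> nat).
        xt 0 = x0 \<and> (\<forall>k. idx (Suc k) \<in> {1..N} \<and> 0 < p (idx (Suc k)) (xt k) \<and>
                          xt (Suc k) = wt (idx (Suc k)) (xt k))
        \<longrightarrow> (\<exists>x :: nat \<Rightarrow> real^'n. x 0 = x0 \<and>
               (\<forall>k. 0 < q (idx (Suc k)) \<and> x (Suc k) = w (idx (Suc k)) (x k)) \<and>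
               (\<forall>k. nrm (x k - xt k) \<le> theta nrm \<delta> / (1 - Max (lam ` {1..N})))))"
proof (intro conjI allI impI)
  fix x idx
  assume "x 0 = x0 \<and> (\<forall>k. idx (Suc k) \<in> {1..N} \<and> 0 < q (idx (Suc k)) \<and>
                         x (Suc k) = w (idx (Suc k)) (x k))"
  then have x: "x 0 = x0" "\<And>k. x (Suc k) = w (idx (Suc k)) (x k)"
    and idx: "\<And>k. idx (Suc k) \<in> {1..N}"
    by auto
  obtain xt where xt: "xt 0 = x0" "\<And>k. xt (Suc k) = wt (idx (Suc k)) (xt k)"
    using orbit_exists[of x0 "\<lambda>k. wt (idx (Suc k))"] by blast
  have "xt 0 \<in> grid \<delta>"
    using xt(1) x0 by simp
  note in_grid = orbit_in_grid[OF wt idx this xt(2)]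
  show "\<exists>xt. xt 0 = x0 \<and>
               (\<forall>k. 0 < p (idx (Suc k)) (xt k) \<and> xt (Suc k) = wt (idx (Suc k)) (xt k)) \<and>
               (\<forall>k. nrm (x k - xt k) \<le> theta nrm \<delta> / (1 - Max (lam ` {1..N})))"
    using xt p_pos[OF idx in_grid] shadowing_orbit_dist_le[OF norm delta N contr wt x0 idx x(1) xt(1) x(2) xt(2)]
    by blast
next
  fix xt idx
  assume "xt 0 = x0 \<and> (\<forall>k. idx (Suc k) \<in> {1..N} \<and> 0 < p (idx (Suc k)) (xt k) \<and>
                          xt (Suc k) = wt (idx (Suc k)) (xt k))"
  then have xt: "xt 0 = x0" "\<And>k. xt (Suc k) = wt (idx (Suc k)) (xt k)"
    and idx: "\<And>k. idx (Suc k) \<in> {1..N}"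
    by auto
  obtain x where x: "x 0 = x0" "\<And>k. x (Suc k) = w (idx (Suc k)) (x k)"
    using orbit_exists[of x0 "\<lambda>k. w (idx (Suc k))"] by blast
  show "\<exists>x. x 0 = x0 \<and>
               (\<forall>k. 0 < q (idx (Suc k)) \<and> x (Suc k) = w (idx (Suc k)) (x k)) \<and>
               (\<forall>k. nrm (x k - xt k) \<le> theta nrm \<delta> / (1 - Max (lam ` {1..N})))"
    using x q_pos[OF idx] shadowing_orbit_dist_le[OF norm delta N contr wt x0 idx x(1) xt(1) x(2) xt(2)]
    by blast
qed

end
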